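(* Let $C=(c_{xy})\in\mathrm{Cor}(n,m)$ and let $u_1,\dots,u_n,v_1,\dots,v_m$ be unit vectors in $\mathbb{R}^{n+m}$ with $c_{xy}=\langle u_x,v_y\rangle$ for all $x,y$. Define $\ell^x_a:=\frac12(1,a\,u_x)\in\mathbb{R}^{n+m+1}$ for $x\in[n]$, $a\in\{\pm1\}$, and $\tilde\ell^y_b:=\frac12(1,b\,v_y)$ for $y\in[m]$, $b\in\{\pm1\}$. Then $p_C(ab|xy)=\langle\ell^x_a,\tilde\ell^y_b\rangle$ for all $a,b,x,y$, and the behavior $\mathbf{p}_C$ is a Gram-Lorentz behavior.
   Context: $\mathrm{Cor}(n,m)$ is the set of matrices $C=(c_{xy})\in[-1,1]^{n\times m}$ for which there exist $d\ge1$, Hermitian $d\times d$ matrices $M_1,\dots,M_n,N_1,\dots,N_m$ with eigenvalues in $[-1,1]$ and a Hermitian psd trace-one matrix $\rho$ on $\mathbb{C}^d\otimes\mathbb{C}^d$ with $c_{xy}=\mathrm{Tr}((M_x\otimes N_y)\rho)$ for all $x,y$. (Equivalently, by Tsirelson's theorem, such unit vectors $u_x,v_y$ exist.) For $C\in\mathrm{Cor}(n,m)$, $\mathbf{p}_C$ is the behavior in the $(n,m,2,2)$-scenario with outcomes $a,b\in\{\pm1\}$ given by $p_C(ab|xy)=\frac{1+ab\,c_{xy}}{4}$; it is a quantum behavior. For a behavior $\mathbf{p}$ in an $(m_A,m_B,o_A,o_B)$-scenario let $N:=m_Ao_A+m_Bo_B$ and let $\mathcal{A}(\mathbf{p})$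 be the set of real symmetric $N\times N$ matrices $R$ indexed by $([m_A]\times[o_A])\cup([m_B]\times[o_B])$ with $\sum_{a,a'}R_{xa,x'a'}=1$ for all $x,x'$, $\sum_{a,b}R_{xa,yb}=1$ for all $x,y$, $\sum_{b,b'}R_{yb,y'b'}=1$ for all $y,y'$, and $R_{xa,yb}=p(ab|xy)$ for all $a,b,x,y$. With the Lorentz cone $\mathcal{L}_k:=\{(c,x)\in\mathbb{R}\times\mathbb{R}^{k-1}:c\ge\|x\|\}$, a matrix is Gram-Lorentz if it is the Gram matrix of vectors in some $\mathcal{L}_k$; a quantum behavior $\mathbf{p}$ is Gram-Lorentz if some Gram-Lorentz matrix lies in $\mathcal{A}(\mathbf{p})$. *)

theory Defs
  imports "HOL-Analysis.Analysis"
begin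

(* Finite-dimensional complex matrices are represented as functions
   nat => nat => complex, of which only indices < d matter. *)

definition herm_mat :: "nat \<Rightarrow> (nat \<Rightarrow> nat \<Rightarrow> complex) \<Rightarrow> bool" where
  "herm_mat d M \<longleftrightarrow> (\<forall>i<d. \<forall>j<d. M j i = cnj (M i j))"

definition mat_eigenvalue :: "nat \<Rightarrow> (nat \<Rightarrow> nat \<Rightarrow> complex) \<Rightarrow> complex \<Rightarrow> bool" where
  "mat_eigenvalue d M lam \<longleftrightarrow>
     (\<exists>v::nat \<Rightarrow> complex. (\<exists>i<d. v i \<noteq> 0) \<and> (\<forall>i<d. (\<Sum>j<d. M i j * v j) = lam * v i))"

definition psd_mat :: "nat \<Rightarrow> (nat \<Rightarrow> nat \<Rightarrow> complex) \<Rightarrow> bool" where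
  "psd_mat d M \<longleftrightarrow> herm_mat d M \<and>
     (\<forall>v::nat \<Rightarrow> complex. 0 \<le> Re (\<Sum>i<d. \<Sum>j<d. cnj (v i) * M i j * v j))"

definition mat_trace :: "nat \<Rightarrow> (nat \<Rightarrow> nat \<Rightarrow> complex) \<Rightarrow> complex" where
  "mat_trace d M = (\<Sum>i<d. M i i)"

definition mat_mult :: "nat \<Rightarrow> (nat \<Rightarrow> nat \<Rightarrow> complex) \<Rightarrow> (nat \<Rightarrow> nat \<Rightarrow> complex) \<Rightarrow> (nat \<Rightarrow> nat \<Rightarrow> complex)" where
  "mat_mult d M N = (\<lambda>i j. \<Sum>k<d. M i k * N k j)"

(* Kronecker product of two d x d matrices, a (d*d) x (d*d) matrix acting on C^d \<otimes> C^d,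
   with basis e_i \<otimes> e_k indexed by i*d+k *)
definition kron :: "nat \<Rightarrow> (nat \<Rightarrow> nat \<Rightarrow> complex) \<Rightarrow> (nat \<Rightarrow> nat \<Rightarrow> complex) \<Rightarrow> (nat \<Rightarrow> nat \<Rightarrow> complex)" where
  "kron d M N = (\<lambda>i j. M (i div d) (j div d) * N (i mod d) (j mod d))"

definition observable :: "nat \<Rightarrow> (nat \<Rightarrow> nat \<Rightarrow> complex) \<Rightarrow> bool" where
  "observable d M \<longleftrightarrow> herm_mat d M \<and>
     (\<forall>lam. mat_eigenvalue d M lam \<longrightarrow> lam \<in> complex_of_real ` {-1..1})"

definition Cor :: "nat \<Rightarrow> nat \<Rightarrow> (nat \<Rightarrow> nat \<Rightarrow> real) set" where
  "Cor n m = {C. (\<forall>x<n. \<forall>y<m. C x y \<in> {-1..1}) \<and>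
     (\<exists>d\<ge>1. \<exists>(Ms :: nat \<Rightarrow> nat \<Rightarrow> nat \<Rightarrow> complex) (Ns :: nat \<Rightarrow> nat \<Rightarrow> nat \<Rightarrow> complex)
        (\<rho> :: nat \<Rightarrow> nat \<Rightarrow> complex).
        (\<forall>x<n. observable d (Ms x)) \<and> (\<forall>y<m. observable d (Ns y)) \<and>
        psd_mat (d*d) \<rho> \<and> mat_trace (d*d) \<rho> = 1 \<and>
        (\<forall>x<n. \<forall>y<m. complex_of_real (C x y) =
            mat_trace (d*d) (mat_mult (d*d) (kron d (Ms x) (Ns y)) \<rho>)))}"

(* Real vectors in R^k are functions nat => real, of which indices < k matter *)
definition rinner :: "nat \<Rightarrow> (nat \<Rightarrow> real) \<Rightarrow> (nat \<Rightarrow> real) \<Rightarrow> real" where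
  "rinner k u v = (\<Sum>i<k. u i * v i)"

(* Lorentz cone L_k = {(c,x) in R x R^(k-1). c >= ||x||}, coordinate 0 is c *)
definition lorentz_cone :: "nat \<Rightarrow> (nat \<Rightarrow> real) set" where
  "lorentz_cone k = {w. sqrt (\<Sum>i\<in>{1..<k}. (w i)\<^sup>2) \<le> w 0}"

definition half_lift :: "real \<Rightarrow> (nat \<Rightarrow> real) \<Rightarrow> (nat \<Rightarrow> real)" where
  "half_lift a u = (\<lambda>i. if i = 0 then 1/2 else a * u (i - 1) / 2)"

(* Behaviors in an (mA,mB,oA,oB)-scenario: p a b x y = p(ab|xy); inputs x < mA, y < mB,
   outcomes a \<in> OA, b \<in> OB (finite outcome sets with card OA = oA, card OB = oB). *)
definition behav_index :: "nat \<Rightarrow> nat \<Rightarrow> 'o set \<Rightarrow> 'o set \<Rightarrow> ((nat \<times> 'o) + (nat \<times> 'o)) set" where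
  "behav_index mA mB OA OB = ({..<mA} \<times> OA) <+> ({..<mB} \<times> OB)"

definition A_set :: "nat \<Rightarrow> nat \<Rightarrow> 'o set \<Rightarrow> 'o set \<Rightarrow> ('o \<Rightarrow> 'o \<Rightarrow> nat \<Rightarrow> nat \<Rightarrow> real)
    \<Rightarrow> (((nat \<times> 'o) + (nat \<times> 'o)) \<Rightarrow> ((nat \<times> 'o) + (nat \<times> 'o)) \<Rightarrow> real) set" where
  "A_set mA mB OA OB p = {R.
     (\<forall>i\<in>behav_index mA mB OA OB. \<forall>j\<in>behav_index mA mB OA OB. R i j = R j i) \<and>
     (\<forall>x<mA. \<forall>x'<mA. (\<Sum>a\<in>OA. \<Sum>a'\<in>OA. R (Inl (x,a)) (Inl (x',a'))) = 1) \<and>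
     (\<forall>x<mA. \<forall>y<mB. (\<Sum>a\<in>OA. \<Sum>b\<in>OB. R (Inl (x,a)) (Inr (y,b))) = 1) \<and>
     (\<forall>y<mB. \<forall>y'<mB. (\<Sum>b\<in>OB. \<Sum>b'\<in>OB. R (Inr (y,b)) (Inr (y',b'))) = 1) \<and>
     (\<forall>x<mA. \<forall>y<mB. \<forall>a\<in>OA. \<forall>b\<in>OB. R (Inl (x,a)) (Inr (y,b)) = p a b x y)}"

definition gram_lorentz_on :: "'i set \<Rightarrow> ('i \<Rightarrow> 'i \<Rightarrow> real) \<Rightarrow> bool" where
  "gram_lorentz_on I R \<longleftrightarrow> (\<exists>k. \<exists>w :: 'i \<Rightarrow> nat \<Rightarrow> real.
     (\<forall>i\<in>I. w i \<in> lorentz_cone k) \<and> (\<forall>i\<in>I. \<forall>j\<in>I. R i j = rinner k (w i) (w j)))"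

definition gram_lorentz_behavior :: "nat \<Rightarrow> nat \<Rightarrow> 'o set \<Rightarrow> 'o set \<Rightarrow> ('o \<Rightarrow> 'o \<Rightarrow> nat \<Rightarrow> nat \<Rightarrow> real) \<Rightarrow> bool" where
  "gram_lorentz_behavior mA mB OA OB p \<longleftrightarrow>
     (\<exists>R \<in> A_set mA mB OA OB p. gram_lorentz_on (behav_index mA mB OA OB) R)"

definition pC :: "(nat \<Rightarrow> nat \<Rightarrow> real) \<Rightarrow> real \<Rightarrow> real \<Rightarrow> nat \<Rightarrow> nat \<Rightarrow> real" where
  "pC C a b x y = (1 + a * b * C x y) / 4"

end

theory Submission imports Defs begin

text \<open>The lifts (1, a u_x)/2 and (1, b v_y)/2 have inner product (1 + a b <u_x, v_y>)/4,
  which is p_C(ab|xy); summing such entries over the four sign pairs gives 1, so the Gram matrix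
  of all lifts lies in A(p_C).  Since u_x and v_y are unit vectors, the spatial part of every
  lift has norm 1/2, equal to its time coordinate, so all lifts lie in the Lorentz cone.\<close>

lemma rinner_commute: "rinner k u v = rinner k v u"
  unfolding rinner_def by (simp add: mult.commute)

lemma rinner_half_lift:
  "rinner (Suc k) (half_lift a u) (half_lift b v) = (1 + a * b * rinner k u v) / 4"
proof -
  have "rinner (Suc k) (half_lift a u) (half_lift b v) =
        half_lift a u 0 * half_lift b v 0 + (\<Sum>i<k. half_lift a u (Suc i) * half_lift b v (Suc i))"
    unfolding rinner_def by (rule sum.lessThan_Suc_shift)
  also have "\<dots> = 1/4 + (\<Sum>i<k. (a * b / 4) * (u i * v i))"
    by (simp add: half_lift_def mult_ac)
  also have "\<dots> = 1/4 + a * b / 4 * rinner k u v"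
    unfolding rinner_def by (simp add: sum_distrib_left)
  finally show ?thesis by simp
qed

lemma half_lift_in_lorentz_cone:
  assumes "rinner k u u = 1" and "a \<in> {-1, 1}"
  shows "half_lift a u \<in> lorentz_cone (Suc k)"
proof -
  have "(\<Sum>i\<in>{1..<Suc k}. (half_lift a u i)\<^sup>2) = (\<Sum>i<k. (half_lift a u (Suc i))\<^sup>2)"
    using sum.shift_bounds_Suc_ivl[of "\<lambda>i. (half_lift a u i)\<^sup>2" 0 k]
    by (simp add: atLeast0LessThan)
  also have "\<dots> = a * a / 4 * rinner k u u"
    by (simp add: rinner_def half_lift_def power2_eq_square sum_distrib_left mult_ac)
  also have "\<dots> = 1/4"
    using assms by auto
  finally have "sqrt (\<Sum>i\<in>{1..<Suc k}. (half_lift a u i)\<^sup>2) = sqrt (1/4)"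
    by (simp only:)
  also have "\<dots> = half_lift a u 0"
    by (simp add: half_lift_def real_sqrt_divide)
  finally show ?thesis
    by (simp add: lorentz_cone_def)
qed

lemma gram_lorentz_on_gram:
  assumes "\<forall>i\<in>I. w i \<in> lorentz_cone k"
  shows "gram_lorentz_on I (\<lambda>i j. rinner k (w i) (w j))"
  unfolding gram_lorentz_on_def using assms by blast

definition half_lifts ::
    "(nat \<Rightarrow> nat \<Rightarrow> real) \<Rightarrow> (nat \<Rightarrow> nat \<Rightarrow> real) \<Rightarrow> (nat \<times> real) + (nat \<times> real) \<Rightarrow> nat \<Rightarrow> real"
  where "half_lifts u v = case_sum (\<lambda>(x, a). half_lift a (u x)) (\<lambda>(y, b). half_lift b (v y))"

lemma gram_half_lifts_in_A_set:
  assumes "\<forall>x<n. \<forall>y<m. C x y = rinner k (u x) (v y)"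
  shows "(\<lambda>i j. rinner (Suc k) (half_lifts u v i) (half_lifts u v j))
           \<in> A_set n m {-1, 1} {-1, 1} (pC C)"
  unfolding A_set_def
proof (intro CollectI conjI ballI allI impI)
  fix i j
  show "rinner (Suc k) (half_lifts u v i) (half_lifts u v j)
      = rinner (Suc k) (half_lifts u v j) (half_lifts u v i)"
    by (rule rinner_commute)
next
  fix x y a b assume "x < n" "y < m"
  then show "rinner (Suc k) (half_lifts u v (Inl (x, a))) (half_lifts u v (Inr (y, b))) = pC C a b x y"
    using assms by (simp add: half_lifts_def rinner_half_lift pC_def)
qed (simp_all add: half_lifts_def rinner_half_lift field_simps)

lemma half_lifts_in_lorentz_cone:
  assumes "\<forall>x<n. rinner k (u x) (u x) = 1" and "\<forall>y<m. rinner k (v y) (v y) = 1"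
  shows "\<forall>i\<in>behav_index n m {-1, 1} {-1, 1}. half_lifts u v i \<in> lorentz_cone (Suc k)"
  using assms half_lift_in_lorentz_cone by (auto simp: behav_index_def half_lifts_def)

theorem lemma5p7:
  fixes n m :: nat and C :: "nat \<Rightarrow> nat \<Rightarrow> real"
    and u v :: "nat \<Rightarrow> nat \<Rightarrow> real"
  assumes "C \<in> Cor n m"
    and "\<forall>x<n. rinner (n+m) (u x) (u x) = 1"
    and "\<forall>y<m. rinner (n+m) (v y) (v y) = 1"
    and "\<forall>x<n. \<forall>y<m. C x y = rinner (n+m) (u x) (v y)"
  shows "(\<forall>x<n. \<forall>y<m. \<forall>a\<in>{-1,1}. \<forall>b\<in>{-1,1}.
            pC C a b x y = rinner (n+m+1) (half_lift a (u x)) (half_lift b (v y)))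
       \<and> gram_lorentz_behavior n m {-1,1} {-1,1} (pC C)"
proof
  show "\<forall>x<n. \<forall>y<m. \<forall>a\<in>{-1,1}. \<forall>b\<in>{-1,1}.
          pC C a b x y = rinner (n+m+1) (half_lift a (u x)) (half_lift b (v y))"
    using assms(4) by (simp add: rinner_half_lift pC_def)
  show "gram_lorentz_behavior n m {-1,1} {-1,1} (pC C)"
    unfolding gram_lorentz_behavior_def
    using gram_half_lifts_in_A_set[OF assms(4)]
      gram_lorentz_on_gram[OF half_lifts_in_lorentz_cone[OF assms(2,3)]]
    by auto
qed

end
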